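(* Let $(A,B)$ be a Katsura pair such that $A$ has no zero rows. If the associated action-restriction pair $(\mathbb{Z}\times E_A^0,E_A)$ is contracting, then it is regular.
   Context: Katsura pair: $N\in\mathbb{N}$, $A\in M_N(\mathbb{N})$ (nonnegative integers), $B\in M_N(\mathbb{Z})$ with $A_{ij}=0\Rightarrow B_{ij}=0$. Graph $E_A$: vertices $\{1,\dots,N\}$, edges $e_{i,j,m}$ ($0\le m<A_{ij}$), $r=i$, $s=j$. The action-restriction pair $(\mathbb{Z}\times E_A^0,E_A)$: the group bundle with elements $a_i^k$ ($a_i^ka_i^l=a_i^{k+l}$, unit $a_i^0$) acts by $a_i^k\cdot e_{i,j,m}=e_{i,j,\hat m}$, $a_i^k|_{e_{i,j,m}}=a_j^{\hat k}$ where $kB_{ij}+m=\hat kA_{ij}+\hat m$, $0\le\hat m<A_{ij}$, extended to finite paths by $g\cdot(e\nu)=(g\cdot e)(g|_e\cdot\nu)$, $g|_{e\nu}=(g|_e)|_\nu$ (the action need not be faithful). Contracting: there is a finite $F$ such that for every $g$ there is $n$ with $g|_\mu\in F$ for all paths $\mu$ of length $\ge n$ with range $d(g)$. Regular: for every $g$ there is $K$ such that $g\cdot\mu=\mu$ and $|\mu|\ge K$ imply $g|_\mu=a^0_{s(\mu)}$. *)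

theory Defs
  imports Main
begin

definition katsura_pair :: "nat \<Rightarrow> (nat \<Rightarrow> nat \<Rightarrow> nat) \<Rightarrow> (nat \<Rightarrow> nat \<Rightarrow> int) \<Rightarrow> bool" where
  "katsura_pair N A B \<longleftrightarrow> 1 \<le> N \<and>
     (\<forall>i\<in>{1..N}. \<forall>j\<in>{1..N}. A i j = 0 \<longrightarrow> B i j = 0)"

definition no_zero_rows :: "nat \<Rightarrow> (nat \<Rightarrow> nat \<Rightarrow> nat) \<Rightarrow> bool" where
  "no_zero_rows N A \<longleftrightarrow> (\<forall>i\<in>{1..N}. \<exists>j\<in>{1..N}. A i j \<noteq> 0)"

text \<open>Edges of E_A: e_{i,j,m} is the triple (i,j,m); range r = i, source s = j.\<close>
type_synonym edge = "nat \<times> nat \<times> nat"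

definition edge_r :: "edge \<Rightarrow> nat" where "edge_r e = fst e"
definition edge_s :: "edge \<Rightarrow> nat" where "edge_s e = fst (snd e)"

definition is_edge :: "nat \<Rightarrow> (nat \<Rightarrow> nat \<Rightarrow> nat) \<Rightarrow> edge \<Rightarrow> bool" where
  "is_edge N A e \<longleftrightarrow> (case e of (i, j, m) \<Rightarrow> i \<in> {1..N} \<and> j \<in> {1..N} \<and> m < A i j)"

text \<open>Elements of the group bundle Z x E_A^0: a_i^k is the pair (k, i); its unit
  space point (domain) is i.\<close>
type_synonym gelt = "int \<times> nat"

definition gdom :: "gelt \<Rightarrow> nat" where "gdom g = snd g"

text \<open>Action and restriction on a single edge (for an edge with range d(g)):
  k B_ij + m = khat A_ij + mhat with 0 <= mhat < A_ij.\<close>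
definition act_edge :: "(nat \<Rightarrow> nat \<Rightarrow> nat) \<Rightarrow> (nat \<Rightarrow> nat \<Rightarrow> int) \<Rightarrow> gelt \<Rightarrow> edge \<Rightarrow> edge" where
  "act_edge A B g e = (case e of (i, j, m) \<Rightarrow>
      (i, j, nat ((fst g * B i j + int m) mod int (A i j))))"

definition res_edge :: "(nat \<Rightarrow> nat \<Rightarrow> nat) \<Rightarrow> (nat \<Rightarrow> nat \<Rightarrow> int) \<Rightarrow> gelt \<Rightarrow> edge \<Rightarrow> gelt" where
  "res_edge A B g e = (case e of (i, j, m) \<Rightarrow>
      ((fst g * B i j + int m) div int (A i j), j))"

text \<open>Finite paths are lists e_1 e_2 ... e_n with s(e_k) = r(e_{k+1}); the path of
  length 0 at vertex v is represented by [] together with the vertex v.\<close>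
fun chain :: "edge list \<Rightarrow> bool" where
  "chain [] = True"
| "chain [e] = True"
| "chain (e # f # rest) = (edge_s e = edge_r f \<and> chain (f # rest))"

definition is_path_at :: "nat \<Rightarrow> (nat \<Rightarrow> nat \<Rightarrow> nat) \<Rightarrow> nat \<Rightarrow> edge list \<Rightarrow> bool" where
  "is_path_at N A v \<mu> \<longleftrightarrow> v \<in> {1..N} \<and> (\<forall>e\<in>set \<mu>. is_edge N A e) \<and> chain \<mu> \<and>
      (\<mu> \<noteq> [] \<longrightarrow> edge_r (hd \<mu>) = v)"

definition path_s :: "nat \<Rightarrow> edge list \<Rightarrow> nat" where
  "path_s v \<mu> = (if \<mu> = [] then v else edge_s (last \<mu>))"

fun act_path :: "(nat \<Rightarrow> nat \<Rightarrow> nat) \<Rightarrow> (nat \<Rightarrow> nat \<Rightarrow> int) \<Rightarrow> gelt \<Rightarrow> edge list \<Rightarrow> edge list" where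
  "act_path A B g [] = []"
| "act_path A B g (e # \<nu>) = act_edge A B g e # act_path A B (res_edge A B g e) \<nu>"

fun res_path :: "(nat \<Rightarrow> nat \<Rightarrow> nat) \<Rightarrow> (nat \<Rightarrow> nat \<Rightarrow> int) \<Rightarrow> gelt \<Rightarrow> edge list \<Rightarrow> gelt" where
  "res_path A B g [] = g"
| "res_path A B g (e # \<nu>) = res_path A B (res_edge A B g e) \<nu>"

definition contracting :: "nat \<Rightarrow> (nat \<Rightarrow> nat \<Rightarrow> nat) \<Rightarrow> (nat \<Rightarrow> nat \<Rightarrow> int) \<Rightarrow> bool" where
  "contracting N A B \<longleftrightarrow> (\<exists>F :: gelt set. finite F \<and>
     (\<forall>g. gdom g \<in> {1..N} \<longrightarrow> (\<exists>n. \<forall>\<mu>. is_path_at N A (gdom g) \<mu> \<and> length \<mu> \<ge> n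
          \<longrightarrow> res_path A B g \<mu> \<in> F)))"

definition regular :: "nat \<Rightarrow> (nat \<Rightarrow> nat \<Rightarrow> nat) \<Rightarrow> (nat \<Rightarrow> nat \<Rightarrow> int) \<Rightarrow> bool" where
  "regular N A B \<longleftrightarrow>
     (\<forall>g. gdom g \<in> {1..N} \<longrightarrow> (\<exists>K. \<forall>\<mu>. is_path_at N A (gdom g) \<mu> \<and>
          act_path A B g \<mu> = \<mu> \<and> length \<mu> \<ge> K
          \<longrightarrow> res_path A B g \<mu> = (0, path_s (gdom g) \<mu>)))"

end

theory Submission
  imports Defs
begin

text \<open>If \<open>a^k\<close> fixes a path \<open>\<mu>\<close>, then \<open>a^(ck)|\<mu> = (a^k|\<mu>)^c\<close> for every integer \<open>c\<close>:
  fixing an edge \<open>e(i,j,m)\<close> means that \<open>A i j\<close> divides \<open>k B i j\<close>, and then the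
  restriction is \<open>k B i j / A i j\<close>, which is linear in \<open>k\<close>.  Contraction bounds the
  exponents of all restrictions to long paths by the constant \<open>M\<close> of the finite set
  \<open>F\<close>; taking \<open>c = M + 1\<close> forces \<open>a^k|\<mu>\<close> to be trivial on every long path fixed
  by \<open>a^k\<close>.\<close>

lemma mod_add_eq_self_iff_dvd:
  fixes a m x :: int
  assumes "0 \<le> m" "m < a"
  shows "(x + m) mod a = m \<longleftrightarrow> a dvd x"
proof
  assume "(x + m) mod a = m"
  then have "(x + m) mod a = m mod a" using assms by simp
  then show "a dvd x" by (simp add: mod_eq_dvd_iff)
qed (use assms in auto)

lemma div_add_small_dvd:
  fixes a m x :: int
  assumes "0 \<le> m" "m < a" "a dvd x"
  shows "(x + m) div a = x div a"
  using assms by (auto elim!: dvdE)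

lemma int_abs_mult_succ_le_self_imp_zero:
  fixes M x :: int
  assumes "\<bar>(M + 1) * x\<bar> \<le> M"
  shows "x = 0"
proof (rule ccontr)
  assume "x \<noteq> 0"
  have "0 \<le> M" using assms abs_ge_zero order_trans by blast
  then have "(M + 1) * 1 \<le> (M + 1) * \<bar>x\<bar>"
    using \<open>x \<noteq> 0\<close> by (intro mult_left_mono) auto
  also have "\<dots> = \<bar>(M + 1) * x\<bar>" using \<open>0 \<le> M\<close> by (simp add: abs_mult)
  finally show False using assms by simp
qed

lemma res_path_snd: "snd (res_path A B g \<mu>) = path_s (snd g) \<mu>"
  by (induction \<mu> arbitrary: g) (auto simp: res_edge_def path_s_def edge_s_def split: prod.splits)

lemma res_path_fixed_scale:
  assumes "\<forall>e\<in>set \<mu>. is_edge N A e" and "act_path A B (k, v) \<mu> = \<mu>"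
  shows "fst (res_path A B (c * k, v) \<mu>) = c * fst (res_path A B (k, v) \<mu>)"
  using assms
proof (induction \<mu> arbitrary: k v)
  case Nil
  then show ?case by simp
next
  case (Cons e \<mu>)
  obtain i j m where e: "e = (i, j, m)" by (cases e)
  have m: "int m < int (A i j)" using Cons.prems(1) e by (simp add: is_edge_def)
  have "nat ((k * B i j + int m) mod int (A i j)) = m"
    using Cons.prems(2) e by (simp add: act_edge_def)
  moreover have "(k * B i j + int m) mod int (A i j) \<ge> 0" using m by simp
  ultimately have "(k * B i j + int m) mod int (A i j) = int m" by linarith
  then have dvd: "int (A i j) dvd k * B i j"
    using mod_add_eq_self_iff_dvd[OF _ m] by simp
  have res_ck: "(c * k * B i j + int m) div int (A i j) = c * ((k * B i j + int m) div int (A i j))"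
    using div_add_small_dvd[OF _ m dvd] div_add_small_dvd[OF _ m dvd_mult[OF dvd, of c]] dvd
    by (simp add: mult.assoc div_mult_swap)
  have "act_path A B ((k * B i j + int m) div int (A i j), j) \<mu> = \<mu>"
    using Cons.prems(2) e by (simp add: res_edge_def)
  with Cons.IH Cons.prems(1) res_ck e show ?case
    by (simp add: res_edge_def)
qed

lemma contracting_bounded_restrictions:
  assumes "contracting N A B"
  obtains M :: int where "\<And>g. gdom g \<in> {1..N} \<Longrightarrow>
    \<exists>n. \<forall>\<mu>. is_path_at N A (gdom g) \<mu> \<and> length \<mu> \<ge> n \<longrightarrow> \<bar>fst (res_path A B g \<mu>)\<bar> \<le> M"
proof -
  obtain F :: "gelt set" where "finite F" and F: "\<forall>g. gdom g \<in> {1..N} \<longrightarrow>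
      (\<exists>n. \<forall>\<mu>. is_path_at N A (gdom g) \<mu> \<and> length \<mu> \<ge> n \<longrightarrow> res_path A B g \<mu> \<in> F)"
    using assms unfolding contracting_def by blast
  define M where "M = Max ((\<lambda>f. \<bar>fst f\<bar>) ` F)"
  have "\<And>f. f \<in> F \<Longrightarrow> \<bar>fst f\<bar> \<le> M"
    unfolding M_def using \<open>finite F\<close> by simp
  then show thesis using F by (intro that) fast
qed

theorem proposition3p6:
  fixes N :: nat and A :: "nat \<Rightarrow> nat \<Rightarrow> nat" and B :: "nat \<Rightarrow> nat \<Rightarrow> int"
  assumes "katsura_pair N A B"
    and "no_zero_rows N A"
    and "contracting N A B"
  shows "regular N A B"
  unfolding regular_def
proof (intro allI impI)
  obtain M where M: "\<And>g. gdom g \<in> {1..N} \<Longrightarrow>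
      \<exists>n. \<forall>\<mu>. is_path_at N A (gdom g) \<mu> \<and> length \<mu> \<ge> n \<longrightarrow> \<bar>fst (res_path A B g \<mu>)\<bar> \<le> M"
    using contracting_bounded_restrictions[OF assms(3)] by blast
  fix g :: gelt
  assume "gdom g \<in> {1..N}"
  obtain k v where g: "g = (k, v)" by (cases g)
  obtain n where n: "\<And>\<mu>. is_path_at N A v \<mu> \<Longrightarrow> length \<mu> \<ge> n \<Longrightarrow>
      \<bar>fst (res_path A B ((M + 1) * k, v) \<mu>)\<bar> \<le> M"
    using M[of "((M + 1) * k, v)"] \<open>gdom g \<in> {1..N}\<close> g by (auto simp: gdom_def)
  show "\<exists>K. \<forall>\<mu>. is_path_at N A (gdom g) \<mu> \<and> act_path A B g \<mu> = \<mu> \<and> length \<mu> \<ge> K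
      \<longrightarrow> res_path A B g \<mu> = (0, path_s (gdom g) \<mu>)"
  proof (intro exI[of _ n] allI impI, elim conjE)
    fix \<mu>
    assume "is_path_at N A (gdom g) \<mu>" and fixed: "act_path A B g \<mu> = \<mu>" and "length \<mu> \<ge> n"
    then have "is_path_at N A v \<mu>" and "\<forall>e\<in>set \<mu>. is_edge N A e"
      using g by (simp_all add: is_path_at_def gdom_def)
    then have "\<bar>(M + 1) * fst (res_path A B g \<mu>)\<bar> \<le> M"
      using n \<open>length \<mu> \<ge> n\<close> res_path_fixed_scale[of \<mu> N A B k v "M + 1"] fixed g
      by metis
    then have "fst (res_path A B g \<mu>) = 0"
      by (rule int_abs_mult_succ_le_self_imp_zero)
    then show "res_path A B g \<mu> = (0, path_s (gdom g) \<mu>)"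
      using res_path_snd[of A B g \<mu>] by (simp add: gdom_def prod_eq_iff)
  qed
qed

end
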